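(* Let $g\ge2$, $A\ge1$, $k\ge1$ and let $f_1(q),\dots,f_g(q)$ be power series with complex coefficients, each of order of magnitude $(A,k)$. Then the wronskian $W_{\mathbf f}(q)$ is a power series of order of magnitude $\left(g!\,A^g\,2^{\frac{g(g-1)(g+3k-2)}{6}},\ gk-1+\frac{g(g+1)}{2}\right)$.
   Context: A power series $h=\sum_{m\ge0}h_mq^m$ has order of magnitude $(A,n)$ ($A\ge1$ real, $n\ge1$ integer) if $|h_m|\le A(m+1)^n$ for all $m$. For $\mathbf f=(f_1,\dots,f_g)$ the wronskian is $W_{\mathbf f}(q)=\det\big(f_j^{(i)}(q)\big)_{0\le i\le g-1,\,1\le j\le g}$, where $f^{(i)}$ is the $i$-th derivative. *)

theory Defs
  imports "HOL-Computational_Algebra.Formal_Power_Series" "Jordan_Normal_Form.Determinant"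
begin

definition order_of_magnitude :: "complex fps \<Rightarrow> real \<Rightarrow> nat \<Rightarrow> bool" where
  "order_of_magnitude h A n \<longleftrightarrow> A \<ge> 1 \<and> n \<ge> 1 \<and>
     (\<forall>m. norm (fps_nth h m) \<le> A * (real m + 1) ^ n)"

definition wronskian :: "nat \<Rightarrow> (nat \<Rightarrow> complex fps) \<Rightarrow> complex fps" where
  "wronskian g f = det (mat g g (\<lambda>(i, j). (fps_deriv ^^ i) (f j)))"

end

theory Submission
  imports Defs
begin

text \<open>Expand the wronskian by the Leibniz formula. The entries of row i are i-th derivatives,
  and differentiating a series with coefficients bounded by C (m+1)^e gives one bounded by
  2^e C (m+1)^(e+1), since (m+2)^e \<le> 2^e (m+1)^e. A product of series adds the exponents plus one
  per factor, because the m-th coefficient of a product is a sum of m+1 terms. Summing the g!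
  signed products multiplies the constant by g!, and the powers of 2 collected along the rows
  add up to the sum over i < g and j < i of k + j, which is g(g-1)(g+3k-2)/6.\<close>

definition fps_coeff_bound :: "'a::real_normed_vector fps \<Rightarrow> real \<Rightarrow> nat \<Rightarrow> bool" where
  "fps_coeff_bound h C e \<longleftrightarrow> (\<forall>m. norm (fps_nth h m) \<le> C * (real m + 1) ^ e)"

lemma fps_coeff_boundD: "fps_coeff_bound h C e \<Longrightarrow> norm (fps_nth h m) \<le> C * (real m + 1) ^ e"
  unfolding fps_coeff_bound_def by blast

lemma fps_coeff_bound_nonneg: "fps_coeff_bound h C e \<Longrightarrow> C \<ge> 0"
  using fps_coeff_boundD[of h C e 0] by (simp add: order_trans[OF norm_ge_zero])

lemma fps_coeff_bound_le:
  assumes "fps_coeff_bound h C e" "i \<le> m"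
  shows "norm (fps_nth h i) \<le> C * (real m + 1) ^ e"
proof -
  have "norm (fps_nth h i) \<le> C * (real i + 1) ^ e"
    using assms(1) by (rule fps_coeff_boundD)
  also have "\<dots> \<le> C * (real m + 1) ^ e"
    using assms fps_coeff_bound_nonneg by (intro mult_left_mono power_mono) auto
  finally show ?thesis .
qed

lemma order_of_magnitude_iff:
  "order_of_magnitude h A n \<longleftrightarrow> A \<ge> 1 \<and> n \<ge> 1 \<and> fps_coeff_bound h A n"
  unfolding order_of_magnitude_def fps_coeff_bound_def by blast

lemma fps_coeff_bound_mult:
  fixes a b :: "'a::real_normed_algebra fps"
  assumes a: "fps_coeff_bound a C e1" and b: "fps_coeff_bound b D e2"
  shows "fps_coeff_bound (a * b) (C * D) (e1 + e2 + 1)"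
  unfolding fps_coeff_bound_def
proof
  fix m
  have C: "C \<ge> 0"
    using a by (rule fps_coeff_bound_nonneg)
  have term_bound: "norm (fps_nth a i * fps_nth b (m - i)) \<le> C * D * (real m + 1) ^ (e1 + e2)"
    if "i \<le> m" for i
  proof -
    have "norm (fps_nth a i) \<le> C * (real m + 1) ^ e1"
      using a that by (rule fps_coeff_bound_le)
    moreover have "norm (fps_nth b (m - i)) \<le> D * (real m + 1) ^ e2"
      using b by (rule fps_coeff_bound_le) simp
    ultimately have "norm (fps_nth a i) * norm (fps_nth b (m - i))
        \<le> C * (real m + 1) ^ e1 * (D * (real m + 1) ^ e2)"
      by (intro mult_mono) (use C in auto)
    then show ?thesis
      using norm_mult_ineq[of "fps_nth a i" "fps_nth b (m - i)"] by (simp add: power_add algebra_simps)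
  qed
  have "norm (fps_nth (a * b) m) \<le> (\<Sum>i=0..m. norm (fps_nth a i * fps_nth b (m - i)))"
    unfolding fps_mult_nth by (rule norm_sum)
  also have "\<dots> \<le> (\<Sum>i=0..m. C * D * (real m + 1) ^ (e1 + e2))"
    by (rule sum_mono) (simp add: term_bound)
  also have "\<dots> = C * D * (real m + 1) ^ (e1 + e2 + 1)"
    by (simp add: algebra_simps)
  finally show "norm (fps_nth (a * b) m) \<le> C * D * (real m + 1) ^ (e1 + e2 + 1)" .
qed

lemma fps_coeff_bound_deriv:
  fixes h :: "'a::{real_normed_algebra_1, comm_semiring_1} fps"
  assumes h: "fps_coeff_bound h C e"
  shows "fps_coeff_bound (fps_deriv h) (2 ^ e * C) (e + 1)"
  unfolding fps_coeff_bound_def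
proof
  fix m
  have "norm (fps_nth (fps_deriv h) m) = norm (of_nat (m + 1) * fps_nth h (m + 1))"
    by (simp only: fps_deriv_nth)
  also have "\<dots> \<le> norm (of_nat (m + 1) :: 'a) * norm (fps_nth h (m + 1))"
    by (rule norm_mult_ineq)
  also have "\<dots> = (real m + 1) * norm (fps_nth h (m + 1))"
    by (simp only: norm_of_nat) simp
  also have "\<dots> \<le> (real m + 1) * (C * (real m + 2) ^ e)"
    using fps_coeff_boundD[OF h, of "m + 1"] by (intro mult_left_mono) (simp_all add: add.commute)
  also have "\<dots> \<le> (real m + 1) * (C * (2 * (real m + 1)) ^ e)"
    using fps_coeff_bound_nonneg[OF h] by (intro mult_left_mono power_mono) auto
  also have "\<dots> = 2 ^ e * C * (real m + 1) ^ (e + 1)"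
    by (simp only: power_mult_distrib power_Suc2 Suc_eq_plus1[symmetric]) (simp add: algebra_simps)
  finally show "norm (fps_nth (fps_deriv h) m) \<le> 2 ^ e * C * (real m + 1) ^ (e + 1)" .
qed

lemma fps_coeff_bound_deriv_funpow:
  fixes h :: "'a::{real_normed_algebra_1, comm_semiring_1} fps"
  assumes "fps_coeff_bound h C e"
  shows "fps_coeff_bound ((fps_deriv ^^ i) h) (2 ^ (\<Sum>j<i. e + j) * C) (e + i)"
proof (induction i)
  case 0
  then show ?case using assms by simp
next
  case (Suc i)
  then show ?case
    using fps_coeff_bound_deriv by (fastforce simp: power_add algebra_simps)
qed

lemma fps_coeff_bound_prod:
  fixes h :: "nat \<Rightarrow> 'a::{real_normed_algebra_1, comm_semiring_1} fps"
  assumes "\<And>i. i < n \<Longrightarrow> fps_coeff_bound (h i) (C i) (e i)"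
  shows "fps_coeff_bound (\<Prod>i<n. h i) (\<Prod>i<n. C i) ((\<Sum>i<n. e i) + n - 1)"
  using assms
proof (induction n)
  case 0
  then show ?case by (simp add: fps_coeff_bound_def)
next
  case (Suc n)
  show ?case
  proof (cases "n = 0")
    case True
    then show ?thesis using Suc.prems by simp
  next
    case False
    have "fps_coeff_bound ((\<Prod>i<n. h i) * h n) ((\<Prod>i<n. C i) * C n)
            ((\<Sum>i<n. e i) + n - 1 + e n + 1)"
      using Suc.IH Suc.prems by (intro fps_coeff_bound_mult) auto
    then show ?thesis using False by (simp add: algebra_simps)
  qed
qed

lemma fps_coeff_bound_sum:
  assumes "finite S" "\<And>x. x \<in> S \<Longrightarrow> fps_coeff_bound (h x) C e"
  shows "fps_coeff_bound (\<Sum>x\<in>S. h x) (real (card S) * C) e"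
  using assms
proof (induction S rule: finite_induct)
  case empty
  then show ?case by (simp add: fps_coeff_bound_def)
next
  case (insert x S)
  show ?case
    unfolding fps_coeff_bound_def
  proof
    fix m
    have "norm (fps_nth (\<Sum>y\<in>insert x S. h y) m) \<le> norm (fps_nth (h x) m) + norm (fps_nth (\<Sum>y\<in>S. h y) m)"
      using insert.hyps by (simp add: norm_triangle_ineq)
    also have "\<dots> \<le> C * (real m + 1) ^ e + real (card S) * C * (real m + 1) ^ e"
      using insert by (intro add_mono fps_coeff_boundD) auto
    also have "\<dots> = real (card (insert x S)) * C * (real m + 1) ^ e"
      using insert.hyps by (simp add: algebra_simps)
    finally show "norm (fps_nth (\<Sum>y\<in>insert x S. h y) m) \<le> real (card (insert x S)) * C * (real m + 1) ^ e" .
  qed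
qed

lemma fps_coeff_bound_signof:
  fixes h :: "'a::{real_normed_algebra_1, comm_ring_1} fps"
  shows "fps_coeff_bound h C e \<Longrightarrow> fps_coeff_bound (signof p * h) C e"
  unfolding fps_coeff_bound_def sign_def by simp

lemma fps_coeff_bound_det:
  fixes M :: "'a::{real_normed_algebra_1, comm_ring_1} fps mat"
  assumes "M \<in> carrier_mat n n"
    and "\<And>i j. i < n \<Longrightarrow> j < n \<Longrightarrow> fps_coeff_bound (M $$ (i, j)) (C i) (e i)"
  shows "fps_coeff_bound (det M) (fact n * (\<Prod>i<n. C i)) ((\<Sum>i<n. e i) + n - 1)"
proof -
  have term_bound: "fps_coeff_bound (signof p * (\<Prod>i<n. M $$ (i, p i))) (\<Prod>i<n. C i) ((\<Sum>i<n. e i) + n - 1)"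
    if "p permutes {0..<n}" for p
    using that assms(2) permutes_in_image[OF that]
    by (intro fps_coeff_bound_signof fps_coeff_bound_prod) auto
  have "fps_coeff_bound (\<Sum>p\<in>{p. p permutes {0..<n}}. signof p * (\<Prod>i<n. M $$ (i, p i)))
          (real (card {p. p permutes {0..<n}}) * (\<Prod>i<n. C i)) ((\<Sum>i<n. e i) + n - 1)"
    using term_bound by (intro fps_coeff_bound_sum finite_permutations) auto
  then show ?thesis
    using assms(1) card_permutations[of "{0..<n}" n] by (simp add: det_def atLeast0LessThan)
qed

lemma sum_lessThan_add_linear: "(\<Sum>i<g. k + i) + g = g * k + g * (g + 1) div 2" for g k :: nat
proof -
  have "(\<Sum>i<g. i) + g = (\<Sum>i\<le>g. i)"
    by (simp add: lessThan_Suc_atMost[symmetric])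
  then show ?thesis
    using gauss_sum_nat[of g] by (simp add: sum.distrib atLeast0AtMost)
qed

lemma sum_lessThan_sum_lessThan_add:
  "6 * (\<Sum>i<g. \<Sum>j<i. k + j) = g * (g - 1) * (g + 3 * k - 2)" for g k :: nat
proof -
  have gauss: "2 * (\<Sum>j<n. int j) = int n * (int n - 1)" for n
    by (induction n) (simp_all add: algebra_simps)
  have "6 * (\<Sum>i<g. \<Sum>j<i. int k + int j) = int g * (int g - 1) * (int g + 3 * int k - 2)"
  proof (induction g)
    case (Suc g)
    then show ?case
      using gauss[of g] by (simp add: sum.distrib algebra_simps)
  qed simp
  moreover have "int (g * (g - 1) * (g + 3 * k - 2)) = int g * (int g - 1) * (int g + 3 * int k - 2)"
    by (cases "g \<ge> 2") (auto simp: of_nat_diff numeral_2_eq_2 less_Suc_eq)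
  ultimately show ?thesis
    by (simp only: of_nat_eq_iff[where 'a = int, symmetric] of_nat_mult of_nat_sum of_nat_add)
qed

theorem mainTheorem6:
  fixes g k :: nat and A :: real and f :: "nat \<Rightarrow> complex fps"
  assumes "g \<ge> 2" and "A \<ge> 1" and "k \<ge> 1"
    and "\<And>j. j < g \<Longrightarrow> order_of_magnitude (f j) A k"
  shows "order_of_magnitude (wronskian g f)
           (fact g * A ^ g * 2 ^ (g * (g - 1) * (g + 3 * k - 2) div 6))
           (g * k - 1 + g * (g + 1) div 2)"
proof -
  have "fps_coeff_bound (wronskian g f)
          (fact g * (\<Prod>i<g. 2 ^ (\<Sum>j<i. k + j) * A)) ((\<Sum>i<g. k + i) + g - 1)"
    unfolding wronskian_def
    using assms(4) by (intro fps_coeff_bound_det) (auto simp: order_of_magnitude_iff fps_coeff_bound_deriv_funpow)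
  moreover have "(\<Prod>i<g. 2 ^ (\<Sum>j<i. k + j) * A) = A ^ g * 2 ^ (\<Sum>i<g. \<Sum>j<i. k + j)"
    by (simp add: prod.distrib power_sum)
  moreover have "(\<Sum>i<g. \<Sum>j<i. k + j) = g * (g - 1) * (g + 3 * k - 2) div 6"
    using sum_lessThan_sum_lessThan_add[where g = g and k = k] by simp
  moreover have "(\<Sum>i<g. k + i) + g - 1 = g * k - 1 + g * (g + 1) div 2"
    using sum_lessThan_add_linear[where g = g and k = k] assms(1,3) by (simp add: Suc_le_eq)
  moreover have "1 \<le> fact g * A ^ g * 2 ^ (g * (g - 1) * (g + 3 * k - 2) div 6)"
    using assms(2) by (intro mult_ge1_I one_le_power) auto
  moreover have "g * k - 1 + g * (g + 1) div 2 \<ge> 1"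
    using assms(1) by (cases g) auto
  ultimately show ?thesis
    by (simp add: order_of_magnitude_iff mult.assoc)
qed

end
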